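(* Let $\hat{\mathcal{C}}$, $\tilde{\mathcal{C}}$ and $\mathcal{F}$ be reference frames in $\mathbb{R}^3$, and let $K$ and $C$ be an intrinsic matrix and a corner matrix, with associated unit vectors $a_0,a_1,a_2,a_3\in\mathbb{R}^3$ (defined in the context). Assume ${}^{\mathcal{F}}R_{\hat{\mathcal{C}}}=I$ and ${}^{\hat{\mathcal{C}}}R_{\tilde{\mathcal{C}}}=I$, i.e. all three frames have the same orientation. If $$\big({}^{\mathcal{F}}t_{\tilde{\mathcal{C}}}\big)^T a_i\ \ge\ 0\qquad\text{for all } i\in\{0,1,2,3\},$$ then $\mathcal{V}_{\tilde{\mathcal{C}}}(K,C)\subseteq \mathcal{V}_{\mathcal{F}}(K,C)$.
   Context: A reference frame $\mathcal{G}$ is an origin in $\mathbb{R}^3$ together with an orthonormal basis. For frames $\mathcal{F},\mathcal{G}$, ${}^{\mathcal{F}}R_{\mathcal{G}}$ denotes the rotation matrix whose columns are the basis vectors of $\mathcal{G}$ expressed in $\mathcal{F}$, and ${}^{\mathcal{F}}t_{\mathcal{G}}$ denotes the vector from the origin of $\mathcal{F}$ to the origin of $\mathcal{G}$, expressed in $\mathcal{F}$-coordinates. For a point $y$, ${}^{\mathcal{F}}y$ denotes its coordinates in frame $\mathcal{F}$. Camera model: $K\in\mathbb{R}^{3\times3}$ is an invertible upper triangular intrinsic matrix; a corner matrix is $C=[c_0\ c_1\ c_2\ c_3]\in\mathbb{R}^{2\times 4}$ of four image points. Define $d_i=K^{-1}[c_i^T\ 1]^T$, $l_i=\operatorname{sign}(d_{i,z})\,d_i/\|d_i\|_2$,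 and $a_i=-\frac{l_i\times l_{(i+1)\bmod 4}}{\|l_i\times l_{(i+1)\bmod 4}\|_2}$ for $i=0,1,2,3$. The field of view of a camera at frame $\mathcal{G}$ with parameters $(K,C)$ is $\mathcal{V}_{\mathcal{G}}(K,C)=\{y\in\mathbb{R}^3: ({}^{\mathcal{G}}y)^T a_i\ge 0\ \forall i\in\{0,1,2,3\}\}$. *)

theory Defs
  imports "HOL-Analysis.Analysis"
begin

text \<open>A reference frame: origin (world coordinates) and a matrix whose columns are the
  basis vectors (world coordinates).\<close>
type_synonym frame = "(real^3) \<times> (real^3^3)"

definition is_frame :: "frame \<Rightarrow> bool" where
  "is_frame G \<longleftrightarrow> orthogonal_matrix (snd G)"

definition coords :: "frame \<Rightarrow> real^3 \<Rightarrow> real^3" where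
  "coords G y = transpose (snd G) *v (y - fst G)"

text \<open>Relative rotation F R G: columns are basis vectors of G expressed in F.\<close>
definition rel_R :: "frame \<Rightarrow> frame \<Rightarrow> real^3^3" where
  "rel_R F G = transpose (snd F) ** snd G"

definition rel_t :: "frame \<Rightarrow> frame \<Rightarrow> real^3" where
  "rel_t F G = transpose (snd F) *v (fst G - fst F)"

definition upper_triangular3 :: "real^3^3 \<Rightarrow> bool" where
  "upper_triangular3 K \<longleftrightarrow> (\<forall>i j. j < i \<longrightarrow> K $ i $ j = 0)"

text \<open>Corner matrix C = [c0 c1 c2 c3] represented by its columns C 0, ..., C 3.\<close>
definition dvec :: "real^3^3 \<Rightarrow> (nat \<Rightarrow> real^2) \<Rightarrow> nat \<Rightarrow> real^3" where
  "dvec K C i = matrix_inv K *v vector [C i $ 1, C i $ 2, 1]"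

definition lvec :: "real^3^3 \<Rightarrow> (nat \<Rightarrow> real^2) \<Rightarrow> nat \<Rightarrow> real^3" where
  "lvec K C i = (sgn (dvec K C i $ 3) / norm (dvec K C i)) *\<^sub>R dvec K C i"

definition avec :: "real^3^3 \<Rightarrow> (nat \<Rightarrow> real^2) \<Rightarrow> nat \<Rightarrow> real^3" where
  "avec K C i = - ((1 / norm (cross3 (lvec K C i) (lvec K C ((i + 1) mod 4))))
                   *\<^sub>R cross3 (lvec K C i) (lvec K C ((i + 1) mod 4)))"

definition FOV :: "frame \<Rightarrow> real^3^3 \<Rightarrow> (nat \<Rightarrow> real^2) \<Rightarrow> (real^3) set" where
  "FOV G K C = {y. \<forall>i\<in>{0..3}. coords G y \<bullet> avec K C i \<ge> 0}"

end

theory Submission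
  imports Defs
begin

text \<open>When all frames share one orientation, the F-coordinates of a point are its
  Ctil-coordinates shifted by the translation between the two origins. The field of view
  in camera coordinates is an intersection of half-spaces through the origin, i.e. a convex cone,
  hence closed under addition; so if the translation itself lies in the cone, every point seen
  from the shifted camera is also seen from F. The argument never uses the shape of the normals
  a_i.\<close>

lemma rel_R_eq_mat_1_imp_same_rotation:
  assumes "is_frame F" and "rel_R F G = mat 1"
  shows "snd G = snd F"
proof -
  have "snd F ** transpose (snd F) = mat 1"
    using assms(1) unfolding is_frame_def orthogonal_matrix_def by simp
  then have "snd G = snd F ** (transpose (snd F) ** snd G)"
    by (metis matrix_mul_assoc matrix_mul_lid)
  also have "\<dots> = snd F"
    using assms(2) unfolding rel_R_def by (simp add: matrix_mul_rid)
  finally show ?thesis .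
qed

lemma coords_eq_add_rel_t:
  assumes "snd G = snd F"
  shows "coords F y = coords G y + rel_t F G"
proof -
  have "y - fst F = (y - fst G) + (fst G - fst F)" by simp
  then show ?thesis
    unfolding coords_def rel_t_def assms by (metis matrix_vector_right_distrib)
qed

lemma FOV_subset_if_same_rotation:
  assumes "snd G = snd F" and "\<forall>i\<in>{0..3}. rel_t F G \<bullet> avec K C i \<ge> 0"
  shows "FOV G K C \<subseteq> FOV F K C"
  using assms unfolding FOV_def coords_eq_add_rel_t[OF assms(1)]
  by (auto simp: inner_add_left intro: add_nonneg_nonneg)

theorem lemma1:
  fixes Chat Ctil F :: frame and K :: "real^3^3" and C :: "nat \<Rightarrow> real^2"
  assumes "is_frame Chat" and "is_frame Ctil" and "is_frame F"
    and "invertible K" and "upper_triangular3 K"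
    and "rel_R F Chat = mat 1" and "rel_R Chat Ctil = mat 1"
    and "\<forall>i\<in>{0..3}. rel_t F Ctil \<bullet> avec K C i \<ge> 0"
  shows "FOV Ctil K C \<subseteq> FOV F K C"
proof (rule FOV_subset_if_same_rotation)
  have "snd Chat = snd F"
    using assms(3,6) by (rule rel_R_eq_mat_1_imp_same_rotation)
  moreover have "snd Ctil = snd Chat"
    using assms(1,7) by (rule rel_R_eq_mat_1_imp_same_rotation)
  ultimately show "snd Ctil = snd F" by simp
  show "\<forall>i\<in>{0..3}. rel_t F Ctil \<bullet> avec K C i \<ge> 0" by (fact assms(8))
qed

end
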